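(* Let $\Delta\ge3$. Given a proper $\Delta$-edge coloring with colors $1,\dots,\Delta$ and a solution of $\Pi^{\Delta}$ on a $\Delta$-regular graph, a solution of $\Pi^{\mathsf{orcx}}$ can be computed in $0$ rounds. Equivalently, $\Pi^{\Delta}\times\mathrm{EC}_\Delta\xrightarrow{0}\Pi^{\mathsf{orcx}}$, where $\mathrm{EC}_\Delta$ is the $\Delta$-edge coloring problem.
   Context: Node-edge-checkable problems $(\Sigma,\mathcal{N},\mathcal{E})$ label half-edges of a $\Delta$-regular graph. $\mathcal{N}$ lists the allowed multisets of the $\Delta$ labels around a node and $\mathcal{E}$ the allowed multisets of the $2$ labels on an edge. Relaxation. $\Pi\xrightarrow{0}\Pi'$ means there is a map $f$ with the following properties. For every $C\in\mathcal{N}_\Pi$ and position $j$, $f$ assigns a label $f(C,j)\in\Sigma_{\Pi'}$. The map must satisfy: - it maps node configurations to node configurations of $\Pi'$; - whenever the $j$-th entry of $C$ and the $j'$-th entry of $C'$ form an element of $\mathcal{E}_\Pi$, then $f(C,j)f(C',j')\in\mathcal{E}_{\Pi'}$. Product. $\Pi\times\Pi'$ has paired labels; node (resp. edge) configurations are those whose first and second coordinates form node (resp. edge) configurations of $\Pi$ and $\Pi'$, respectively. $\mathrm{EC}_\Delta$ has labels $\{1,\dots,\Delta\}$, node configuration $1\,2\cdots\Delta$, and edge configurations $i\,i$. $\Pi^{\Delta}$ has labels $(y,z)\in\{1,\dots,\Delta\}^2$ and node configurations $c\cdots c$ for each label $c$. Its edge configurations are the $(y,z)(y',z')$ such that at least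 one of the following holds: - (1) $y\ne1\ne z$, $y\ne y'$ and $z\ne z'$ (or symmetrically $y'\ne1\ne z'$, $y\ne y'$ and $z\ne z'$); - (2) $y=y'=1$, $z\ne1\ne z'$ and $z\ne z'$; - (3) $z=z'=1$, $y\ne1\ne y'$ and $y\ne y'$. $\Pi^{\mathsf{orcx}}$ has labels $\Sigma_1\cup\Sigma_2$ with $\Sigma_1=\{\mathsf O,\mathsf R,\mathsf C,\mathsf X\}$ and $\Sigma_2=\{\mathsf o,\mathsf r,\mathsf c,\mathsf x\}$. Its node configurations are the $L_1\dots L_\Delta$ such that: - exactly one $L_k$ lies in $\Sigma_1$; and - there are distinct $k,k'$ such that all other $L_{k''}\in\{\mathsf O,\mathsf o\}$, and either ($L_k\in\{\mathsf X,\mathsf x\}$ and $L_{k'}\in\{\mathsf O,\mathsf o\}$) or ($L_k\in\{\mathsf R,\mathsf r\}$ and $L_{k'}\in\{\mathsf C,\mathsf c\}$). Its edge configurations are all configurations in $[\mathsf O]\,[\mathsf O\mathsf R\mathsf C\mathsf X]$, $[\mathsf O\mathsf R]\,[\mathsf O\mathsf R]$, $[\mathsf O\mathsf C]\,[\mathsf O\mathsf C]$, $[\mathsf o]\,[\mathsf o\mathsf r\mathsf c\mathsf x]$ and $[\mathsf o\mathsf r]\,[\mathsf o\mathsf c]$, where $[XY]\,[ZW]$ means one entry is from the first set and the other from the second. *)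

theory Defs
  imports Main "HOL-Library.Multiset"
begin

text \<open>Node-edge-checkable problems: a label set, node configurations (multisets of
  labels, of size Delta) and edge configurations (multisets of size 2).\<close>
record 'a ne_problem =
  labels :: "'a set"
  nodes  :: "'a multiset set"
  edges  :: "'a multiset set"

text \<open>A node configuration C is given with positions,
  i.e. as a list L of length Delta with mset L in the node constraint; f assigns to
  every such L and position j < Delta an output label.\<close>
definition relax0 :: "nat \<Rightarrow> 'a ne_problem \<Rightarrow> 'b ne_problem \<Rightarrow> bool" where
  "relax0 \<Delta> P Q \<longleftrightarrow> (\<exists>f :: 'a list \<Rightarrow> nat \<Rightarrow> 'b.
     (\<forall>L j. length L = \<Delta> \<and> mset L \<in> nodes P \<and> j < \<Delta> \<longrightarrow> f L j \<in> labels Q) \<and>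
     (\<forall>L. length L = \<Delta> \<and> mset L \<in> nodes P \<longrightarrow> mset (map (f L) [0..<\<Delta>]) \<in> nodes Q) \<and>
     (\<forall>L L' j j'. length L = \<Delta> \<and> mset L \<in> nodes P \<and> j < \<Delta> \<and>
                  length L' = \<Delta> \<and> mset L' \<in> nodes P \<and> j' < \<Delta> \<and>
                  {#L ! j, L' ! j'#} \<in> edges P \<longrightarrow> {#f L j, f L' j'#} \<in> edges Q))"

definition prod_problem :: "'a ne_problem \<Rightarrow> 'b ne_problem \<Rightarrow> ('a \<times> 'b) ne_problem" where
  "prod_problem P Q = \<lparr> labels = labels P \<times> labels Q,
     nodes = {M. set_mset M \<subseteq> labels P \<times> labels Q \<and>
                 image_mset fst M \<in> nodes P \<and> image_mset snd M \<in> nodes Q},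
     edges = {M. set_mset M \<subseteq> labels P \<times> labels Q \<and>
                 image_mset fst M \<in> edges P \<and> image_mset snd M \<in> edges Q} \<rparr>"

definition EC :: "nat \<Rightarrow> nat ne_problem" where
  "EC \<Delta> = \<lparr> labels = {1..\<Delta>},
     nodes = {mset [1..<\<Delta>+1]},
     edges = {{#i, i#} | i. i \<in> {1..\<Delta>}} \<rparr>"

definition PiD_edge :: "nat \<times> nat \<Rightarrow> nat \<times> nat \<Rightarrow> bool" where
  "PiD_edge a b \<longleftrightarrow> (case a of (y, z) \<Rightarrow> case b of (y', z') \<Rightarrow>
      (y \<noteq> 1 \<and> z \<noteq> 1 \<and> y \<noteq> y' \<and> z \<noteq> z') \<or>
      (y' \<noteq> 1 \<and> z' \<noteq> 1 \<and> y \<noteq> y' \<and> z \<noteq> z') \<or>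
      (y = 1 \<and> y' = 1 \<and> z \<noteq> 1 \<and> z' \<noteq> 1 \<and> z \<noteq> z') \<or>
      (z = 1 \<and> z' = 1 \<and> y \<noteq> 1 \<and> y' \<noteq> 1 \<and> y \<noteq> y'))"

definition PiD :: "nat \<Rightarrow> (nat \<times> nat) ne_problem" where
  "PiD \<Delta> = \<lparr> labels = {1..\<Delta>} \<times> {1..\<Delta>},
     nodes = {replicate_mset \<Delta> c | c. c \<in> {1..\<Delta>} \<times> {1..\<Delta>}},
     edges = {{#a, b#} | a b. a \<in> {1..\<Delta>} \<times> {1..\<Delta>} \<and> b \<in> {1..\<Delta>} \<times> {1..\<Delta>} \<and> PiD_edge a b} \<rparr>"

datatype orcx = O_up | R_up | C_up | X_up | o_lo | r_lo | c_lo | x_lo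

definition sigma1 :: "orcx set" where "sigma1 = {O_up, R_up, C_up, X_up}"
definition sigma2 :: "orcx set" where "sigma2 = {o_lo, r_lo, c_lo, x_lo}"

definition orcx_node_list :: "nat \<Rightarrow> orcx list \<Rightarrow> bool" where
  "orcx_node_list \<Delta> L \<longleftrightarrow> length L = \<Delta> \<and>
     card {k. k < \<Delta> \<and> L ! k \<in> sigma1} = 1 \<and>
     (\<exists>k k'. k < \<Delta> \<and> k' < \<Delta> \<and> k \<noteq> k' \<and>
        (\<forall>k''. k'' < \<Delta> \<and> k'' \<noteq> k \<and> k'' \<noteq> k' \<longrightarrow> L ! k'' \<in> {O_up, o_lo}) \<and>
        ((L ! k \<in> {X_up, x_lo} \<and> L ! k' \<in> {O_up, o_lo}) \<or>
         (L ! k \<in> {R_up, r_lo} \<and> L ! k' \<in> {C_up, c_lo})))"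

definition orcx_edge :: "orcx \<Rightarrow> orcx \<Rightarrow> bool" where
  "orcx_edge a b \<longleftrightarrow>
     (a \<in> {O_up} \<and> b \<in> {O_up, R_up, C_up, X_up}) \<or>
     (a \<in> {O_up, R_up} \<and> b \<in> {O_up, R_up}) \<or>
     (a \<in> {O_up, C_up} \<and> b \<in> {O_up, C_up}) \<or>
     (a \<in> {o_lo} \<and> b \<in> {o_lo, r_lo, c_lo, x_lo}) \<or>
     (a \<in> {o_lo, r_lo} \<and> b \<in> {o_lo, c_lo})"

definition PiORCX :: "nat \<Rightarrow> orcx ne_problem" where
  "PiORCX \<Delta> = \<lparr> labels = sigma1 \<union> sigma2,
     nodes = {mset L | L. orcx_node_list \<Delta> L},
     edges = {{#a, b#} | a b. orcx_edge a b \<or> orcx_edge b a} \<rparr>"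

end

theory Submission
  imports Defs
begin

(* The edge colouring singles out the colour-1 edge of every node: it carries Sigma_1 labels at
   both endpoints and every other edge carries Sigma_2 labels at both endpoints, so each node has
   exactly one Sigma_1 label and only labels of the same case ever meet on an edge. Across a colour-1 edge the Pi^Delta constraints exclude R C and
   X against anything but O; across an edge of colour col <> 1 they forbid y = y' = col and
   z = z' = col, which excludes r r, c c and x against r, c or x. *)

definition orcx_label :: "nat \<times> nat \<Rightarrow> nat \<Rightarrow> orcx" where
  "orcx_label c col = (case c of (y, z) \<Rightarrow>
     if col = 1 then
       (if y = 1 then (if z = 1 then X_up else R_up) else if z = 1 then C_up else O_up)
     else if col = y then (if col = z then x_lo else r_lo)
     else if col = z then c_lo
     else o_lo)"

lemma orcx_label_in_labels: "orcx_label c col \<in> labels (PiORCX \<Delta>)"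
  by (simp add: orcx_label_def PiORCX_def sigma1_def sigma2_def split: prod.split)

lemma orcx_label_in_sigma1_iff: "orcx_label c col \<in> sigma1 \<longleftrightarrow> col = 1"
  by (simp add: orcx_label_def sigma1_def split: prod.split)

lemma PiD_edge_sym: "PiD_edge a b \<longleftrightarrow> PiD_edge b a"
  by (auto simp: PiD_edge_def split: prod.splits)

lemma orcx_label_edge:
  assumes "PiD_edge a b"
  shows "{#orcx_label a col, orcx_label b col#} \<in> edges (PiORCX \<Delta>)"
proof -
  obtain y z y' z' where "a = (y, z)" "b = (y', z')"
    by fastforce
  with assms have "orcx_edge (orcx_label a col) (orcx_label b col) \<or>
                   orcx_edge (orcx_label b col) (orcx_label a col)"
    unfolding PiD_edge_def orcx_edge_def orcx_label_def
    by (cases "y = 1"; cases "z = 1"; cases "y' = 1"; cases "z' = 1"; cases "col = 1") auto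
  then show ?thesis
    by (auto simp: PiORCX_def)
qed

lemma orcx_node_list_map:
  assumes P: "distinct P" "set P = {1..\<Delta>}"
    and sigma1_iff: "\<And>v. v \<in> {1..\<Delta>} \<Longrightarrow> h v \<in> sigma1 \<longleftrightarrow> v = 1"
    and ab: "a \<in> {1..\<Delta>}" "b \<in> {1..\<Delta>}" "a \<noteq> b"
    and others: "\<And>v. v \<in> {1..\<Delta>} - {a, b} \<Longrightarrow> h v \<in> {O_up, o_lo}"
    and pair: "(h a \<in> {X_up, x_lo} \<and> h b \<in> {O_up, o_lo}) \<or>
               (h a \<in> {R_up, r_lo} \<and> h b \<in> {C_up, c_lo})"
  shows "orcx_node_list \<Delta> (map h P)"
proof -
  have len: "length P = \<Delta>"
    using P distinct_card by fastforce
  have P_nth: "P ! i \<in> {1..\<Delta>}" if "i < \<Delta>" for i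
    using P(2) len that nth_mem by blast
  have position: "\<exists>k < \<Delta>. \<forall>i < \<Delta>. P ! i = v \<longleftrightarrow> i = k" if "v \<in> {1..\<Delta>}" for v
    using that P len by (metis in_set_conv_nth nth_eq_iff_index_eq)
  obtain k1 where k1: "k1 < \<Delta>" "\<And>i. i < \<Delta> \<Longrightarrow> P ! i = 1 \<longleftrightarrow> i = k1"
    using position[of 1] ab(1) by auto
  obtain k where k: "k < \<Delta>" "\<And>i. i < \<Delta> \<Longrightarrow> P ! i = a \<longleftrightarrow> i = k"
    using position ab(1) by blast
  obtain k' where k': "k' < \<Delta>" "\<And>i. i < \<Delta> \<Longrightarrow> P ! i = b \<longleftrightarrow> i = k'"
    using position ab(2) by blast
  have "{i. i < \<Delta> \<and> map h P ! i \<in> sigma1} = {k1}"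
    using sigma1_iff P_nth k1 len by auto
  then have card_sigma1: "card {i. i < \<Delta> \<and> map h P ! i \<in> sigma1} = 1"
    by simp
  have others_nth: "\<forall>i. i < \<Delta> \<and> i \<noteq> k \<and> i \<noteq> k' \<longrightarrow> map h P ! i \<in> {O_up, o_lo}"
    using others P_nth k k' len by auto
  have "k \<noteq> k'" "map h P ! k = h a" "map h P ! k' = h b"
    using k k' ab(3) len by auto
  with k(1) k'(1) others_nth pair
  have "\<exists>k k'. k < \<Delta> \<and> k' < \<Delta> \<and> k \<noteq> k' \<and>
      (\<forall>i. i < \<Delta> \<and> i \<noteq> k \<and> i \<noteq> k' \<longrightarrow> map h P ! i \<in> {O_up, o_lo}) \<and>
      ((map h P ! k \<in> {X_up, x_lo} \<and> map h P ! k' \<in> {O_up, o_lo}) \<or>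
       (map h P ! k \<in> {R_up, r_lo} \<and> map h P ! k' \<in> {C_up, c_lo}))"
    by (intro exI[of _ k] exI[of _ k']) simp
  then show ?thesis
    unfolding orcx_node_list_def using card_sigma1 len by simp
qed

lemma orcx_label_node:
  assumes "2 \<le> \<Delta>" "c \<in> {1..\<Delta>} \<times> {1..\<Delta>}" "distinct P" "set P = {1..\<Delta>}"
  shows "orcx_node_list \<Delta> (map (orcx_label c) P)"
proof -
  obtain y z where c: "c = (y, z)" "y \<in> {1..\<Delta>}" "z \<in> {1..\<Delta>}"
    using assms(2) by blast
  note node = orcx_node_list_map[OF assms(3,4) orcx_label_in_sigma1_iff]
  consider "y = 1" "z = 1" | "y = 1" "z \<noteq> 1" | "y \<noteq> 1" "z = 1" | "y \<noteq> 1" "y = z"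
    | "y \<noteq> 1" "z \<noteq> 1" "y \<noteq> z"
    by blast
  then show ?thesis
  proof cases
    case 1
    show ?thesis
      by (rule node[of 1 2]) (use assms(1) 1 c in \<open>auto simp: orcx_label_def\<close>)
  next
    case 2
    show ?thesis
      by (rule node[of 1 z]) (use 2 c in \<open>auto simp: orcx_label_def\<close>)
  next
    case 3
    show ?thesis
      by (rule node[of y 1]) (use 3 c in \<open>auto simp: orcx_label_def\<close>)
  next
    case 4
    show ?thesis
      by (rule node[of y 1]) (use 4 c in \<open>auto simp: orcx_label_def\<close>)
  next
    case 5
    show ?thesis
      by (rule node[of y z]) (use 5 c in \<open>auto simp: orcx_label_def\<close>)
  qed
qed

lemma prod_PiD_EC_nodeE:
  assumes "mset L \<in> nodes (prod_problem (PiD \<Delta>) (EC \<Delta>))"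
  obtains c P where "c \<in> {1..\<Delta>} \<times> {1..\<Delta>}" "distinct P" "set P = {1..\<Delta>}"
    "L = map (Pair c) P"
proof -
  from assms obtain c where c: "c \<in> {1..\<Delta>} \<times> {1..\<Delta>}"
    and fst_L: "mset (map fst L) = replicate_mset \<Delta> c"
    and snd_L: "mset (map snd L) = mset [1..<\<Delta>+1]"
    by (auto simp: prod_problem_def PiD_def EC_def)
  have "\<forall>x \<in> set (map fst L). x = c"
    using mset_eq_setD[of "map fst L" "replicate \<Delta> c"] fst_L by auto
  then have "map fst L = replicate (length L) c"
    by (metis length_map replicate_length_same)
  then have "L = map (Pair c) (map snd L)"
    by (metis length_map order_refl take_all zip_map_fst_snd zip_replicate1)
  moreover have "distinct (map snd L)" "set (map snd L) = {1..\<Delta>}"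
    using mset_eq_imp_distinct_iff[OF snd_L] mset_eq_setD[OF snd_L] by auto
  ultimately show ?thesis
    using c that by blast
qed

lemma prod_PiD_EC_edgeD:
  assumes "{#p, q#} \<in> edges (prod_problem (PiD \<Delta>) (EC \<Delta>))"
  shows "PiD_edge (fst p) (fst q)" "snd p = snd q"
  using assms PiD_edge_sym
  by (auto simp: prod_problem_def PiD_def EC_def add_eq_conv_diff)

theorem mainTheorem17:
  fixes \<Delta> :: nat
  assumes "\<Delta> \<ge> 3"
  shows "relax0 \<Delta> (prod_problem (PiD \<Delta>) (EC \<Delta>)) (PiORCX \<Delta>)"
proof -
  define f where "f L j = case_prod orcx_label (L ! j)"
    for L :: "((nat \<times> nat) \<times> nat) list" and j
  have "mset (map (f L) [0..<\<Delta>]) \<in> nodes (PiORCX \<Delta>)"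
    if len_L: "length L = \<Delta>" and node_L: "mset L \<in> nodes (prod_problem (PiD \<Delta>) (EC \<Delta>))"
    for L
  proof -
    obtain c P where c: "c \<in> {1..\<Delta>} \<times> {1..\<Delta>}" and P: "distinct P" "set P = {1..\<Delta>}"
      and L: "L = map (Pair c) P"
      using prod_PiD_EC_nodeE[OF node_L] by blast
    have outputs: "map (f L) [0..<\<Delta>] = map (orcx_label c) P"
      using len_L by (intro nth_equalityI) (auto simp: f_def L)
    have "orcx_node_list \<Delta> (map (orcx_label c) P)"
      using orcx_label_node[OF _ c P] assms by simp
    then show ?thesis
      unfolding PiORCX_def ne_problem.simps outputs by blast
  qed
  moreover have "{#f L j, f L' j'#} \<in> edges (PiORCX \<Delta>)"
    if "{#L ! j, L' ! j'#} \<in> edges (prod_problem (PiD \<Delta>) (EC \<Delta>))" for L L' j j'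
    using prod_PiD_EC_edgeD[OF that] orcx_label_edge
    by (simp add: f_def split_beta)
  ultimately show ?thesis
    unfolding relax0_def using orcx_label_in_labels
    by (intro exI[of _ f]) (simp add: f_def split_beta)
qed

end
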